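(* Let $y_0\in E$ and suppose: (A1) $\eta>0$ on $[y_0,\infty)$ and $\eta\in C^2([y_0,\infty))$; (A2) $b^2/\eta$, $\tilde a/\eta$, $\eta'/\eta$ are bounded on $[y_0,\infty)$; (A3) $\Psi\eta(y)\to1$ as $y\to\infty$. Let $u$ be a solution of $0=\tfrac12b^2u''+\tilde au'+\eta u-u^2-d\frac{(u')^2}{u}$ on $[y_0,\infty)$ with $C_1\eta\le u\le C_2\eta$ there for some $0<C_1<C_2$. Assume that there are constants $K_1,K_2\neq0$ with $\frac{\tilde a}{\eta}+(b^2-2d)\frac{\eta'}{\eta^2}\to K_1$ and $\frac d\eta\to K_2$ as $y\to\infty$, and that $\eta'(y)/\eta(y)\to0$ as $y\to\infty$. Then $u'(y)/u(y)\to0$ as $y\to\infty$.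
   Context: $E=(E_-,\infty)$ with $E_-\in\{-\infty\}\cup\mathbb R$. $r,\lambda,\sigma,a,b,\rho,\delta:E\to\mathbb R$ are locally Lipschitz with $\sigma>0$, $b(y)\neq0$, $\rho(y)\in[-1,1]$; $R\in(0,\infty)\setminus\{1\}$. Define $\eta=\frac1R\big(\delta-(1-R)(r+\frac{\lambda^2}{2R})\big)$, $\tilde a=a+\frac{1-R}{R}\rho\lambda b$, $d=\frac12b^2((1-\rho^2)R+\rho^2+1)$, and for positive $g\in C^2$, $\Psi g=1+\frac{\frac12b^2g''+\tilde ag'}{g^2}-d\frac{(g')^2}{g^3}$. *)

theory Defs
  imports "HOL-Analysis.Analysis"
begin

definition loc_lip_on :: "real set \<Rightarrow> (real \<Rightarrow> real) \<Rightarrow> bool" where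
  "loc_lip_on E f \<longleftrightarrow> (\<forall>x\<in>E. \<exists>e>0. \<exists>C. C-lipschitz_on (cball x e \<inter> E) f)"

definition eta_fun :: "real \<Rightarrow> (real \<Rightarrow> real) \<Rightarrow> (real \<Rightarrow> real) \<Rightarrow> (real \<Rightarrow> real) \<Rightarrow> real \<Rightarrow> real" where
  "eta_fun R r lam delta y = (1 / R) * (delta y - (1 - R) * (r y + (lam y)^2 / (2 * R)))"

definition atilde_fun :: "real \<Rightarrow> (real \<Rightarrow> real) \<Rightarrow> (real \<Rightarrow> real) \<Rightarrow> (real \<Rightarrow> real) \<Rightarrow> (real \<Rightarrow> real) \<Rightarrow> real \<Rightarrow> real" where
  "atilde_fun R a rho lam b y = a y + (1 - R) / R * rho y * lam y * b y"

definition d_fun :: "real \<Rightarrow> (real \<Rightarrow> real) \<Rightarrow> (real \<Rightarrow> real) \<Rightarrow> real \<Rightarrow> real" where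
  "d_fun R b rho y = (1/2) * (b y)^2 * ((1 - (rho y)^2) * R + (rho y)^2 + 1)"

text \<open>Psi g at y, given the values g = g(y), g1 = g'(y), g2 = g''(y) and coefficients.\<close>
definition Psi_val :: "real \<Rightarrow> real \<Rightarrow> real \<Rightarrow> real \<Rightarrow> real \<Rightarrow> real \<Rightarrow> real" where
  "Psi_val bb aa dd g g1 g2 = 1 + ((1/2) * bb^2 * g2 + aa * g1) / g^2 - dd * g1^2 / g^3"

end

theory Submission
  imports Defs
begin

(* Let l = ln (u / \<eta>) and p = l' = u'/u - \<eta>'/\<eta>. Eliminating u'' with the ODE and \<eta>'' with the
   definition of \<Psi>\<eta> gives a Riccati equation
     p' = (2 \<eta> / b^2) ((d - b^2/2)/\<eta> p^2 - k p + u/\<eta> - \<Psi>\<eta>),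
   where k is the quantity tending to K1. Eventually its coefficients are bounded and, since
   d \<ge> (1 + min R 1) b^2/2 and d/\<eta> \<rightarrow> K2 > 0, the leading one is bounded away from 0.
   As l is bounded, |p| cannot become large: from then on p' > 0 would drive l out of its range.
   At a critical point of l, p' has the sign of u/\<eta> - \<Psi>\<eta>, so far out the interior extrema of l
   lie near ln 1 = 0, and a bounded function with this property converges. Then l converges
   with l'' bounded, and Barbalat's lemma gives p \<rightarrow> 0, hence u'/u = p + \<eta>'/\<eta> \<rightarrow> 0. *)

section \<open>Differential inequalities on the real line\<close>

lemma DERIV_pos_stays_above:
  fixes f f' :: "real \<Rightarrow> real"
  assumes "a \<le> b" and deriv: "\<forall>x\<in>{a..b}. (f has_real_derivative f' x) (at x)"
    and "c \<le> f a" and pos: "\<forall>x\<in>{a..b}. c \<le> f x \<longrightarrow> 0 < f' x"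
  shows "c \<le> f b"
proof (rule ccontr)
  assume "\<not> c \<le> f b"
  define S where "S = {a..b} \<inter> f -` {c..}"
  have "continuous_on {a..b} f"
    using deriv by (meson DERIV_isCont continuous_at_imp_continuous_on)
  then have "closed S"
    unfolding S_def by (intro continuous_closed_preimage) auto
  moreover have bdd: "bdd_above S"
    unfolding S_def by (rule bdd_aboveI[of _ b]) auto
  moreover have "a \<in> S"
    using \<open>a \<le> b\<close> \<open>c \<le> f a\<close> by (auto simp: S_def)
  ultimately have "Sup S \<in> S"
    using closed_contains_Sup[OF _ bdd] by auto
  define s where "s = Sup S"
  with \<open>Sup S \<in> S\<close> \<open>\<not> c \<le> f b\<close> have "s < b" "a \<le> s" "c \<le> f s"
    by (auto simp: S_def less_le)
  then obtain h where h: "h > 0" "\<forall>t>0. t < h \<longrightarrow> f s < f (s + t)"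
    using DERIV_pos_inc_right[of f "f' s" s] deriv pos by auto
  define t where "t = min h (b - s) / 2"
  have "0 < t" "t < h" "s + t \<le> b"
    using h \<open>s < b\<close> by (auto simp: t_def min_def field_simps)
  then have "s + t \<in> S"
    using h \<open>a \<le> s\<close> \<open>c \<le> f s\<close> by (auto simp: S_def)
  then have "s + t \<le> s"
    unfolding s_def using bdd by (rule cSup_upper)
  with \<open>0 < t\<close> show False by simp
qed

lemma DERIV_pos_stays_below:
  fixes f f' :: "real \<Rightarrow> real"
  assumes "a \<le> b" and deriv: "\<forall>x\<in>{a..b}. (f has_real_derivative f' x) (at x)"
    and "f b \<le> c" and pos: "\<forall>x\<in>{a..b}. f x \<le> c \<longrightarrow> 0 < f' x"
  shows "f a \<le> c"
proof -
  have "- c \<le> - f (- (- a))"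
  proof (rule DERIV_pos_stays_above[of "- b" "- a" "\<lambda>x. - f (- x)" "\<lambda>x. f' (- x)"])
    show "\<forall>x\<in>{- b..- a}. ((\<lambda>x. - f (- x)) has_real_derivative f' (- x)) (at x)"
    proof
      fix x :: real assume "x \<in> {- b..- a}"
      then have "(f has_real_derivative f' (- x)) (at (- x))" using deriv by auto
      from DERIV_chain2[OF this DERIV_minus[OF DERIV_ident]]
      show "((\<lambda>x. - f (- x)) has_real_derivative f' (- x)) (at x)"
        using DERIV_minus by fastforce
    qed
  qed (use assms in auto)
  then show ?thesis by simp
qed

lemma DERIV_interior_max:
  fixes f p q :: "real \<Rightarrow> real"
  assumes "a < z" "z < b"
    and df: "\<forall>x\<in>{a..b}. (f has_real_derivative p x) (at x)"
    and dp: "\<forall>x\<in>{a..b}. (p has_real_derivative q x) (at x)"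
    and max: "\<forall>x\<in>{a..b}. f x \<le> f z"
  shows "p z = 0" "q z \<le> 0"
proof -
  show p0: "p z = 0"
  proof (rule DERIV_local_max)
    show "(f has_real_derivative p z) (at z)" using df assms by auto
    show "\<forall>y. \<bar>z - y\<bar> < min (z - a) (b - z) \<longrightarrow> f y \<le> f z" using max by (auto simp: abs_if)
  qed (use assms in auto)
  show "q z \<le> 0"
  proof (rule ccontr)
    assume "\<not> q z \<le> 0"
    then obtain h where h: "h > 0" "\<forall>t>0. t < h \<longrightarrow> p z < p (z + t)"
      using DERIV_pos_inc_right[of p "q z" z] dp assms by auto
    define t where "t = min h (b - z) / 2"
    have t: "0 < t" "t < h" "z + t \<le> b"
      using h \<open>z < b\<close> by (auto simp: t_def min_def field_simps)
    obtain \<xi> where \<xi>: "z < \<xi>" "\<xi> < z + t" "f (z + t) - f z = t * p \<xi>"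
      using MVT2[of z "z + t" f p] t df \<open>a < z\<close> by auto
    have "0 < p \<xi>" using h(2)[rule_format, of "\<xi> - z"] \<xi> t p0 by auto
    then have "f z < f (z + t)" using \<xi> t by (simp add: algebra_simps)
    moreover have "f (z + t) \<le> f z"
      using max t \<open>a < z\<close> by simp
    ultimately show False by simp
  qed
qed

lemma barbalat_lemma:
  fixes f p q :: "real \<Rightarrow> real"
  assumes df: "\<forall>x\<ge>T. (f has_real_derivative p x) (at x)"
    and dp: "\<forall>x\<ge>T. (p has_real_derivative q x) (at x)"
    and q_bdd: "\<forall>x\<ge>T. \<bar>q x\<bar> \<le> B" and lim: "(f \<longlongrightarrow> L) at_top"
  shows "(p \<longlongrightarrow> 0) at_top"
proof (rule tendstoI)
  fix \<epsilon> :: real assume "\<epsilon> > 0"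
  define B' where "B' = \<bar>B\<bar> + 1"
  define h where "h = \<epsilon> / (2 * B')"
  have "B' > 0" "h > 0" "h * B' = \<epsilon> / 2"
    using \<open>\<epsilon> > 0\<close> by (auto simp: B'_def h_def field_simps)
  obtain N where N: "\<forall>x\<ge>N. \<bar>f x - L\<bar> < \<epsilon> * h / 4"
    using tendstoD[OF lim, of "\<epsilon> * h / 4"] \<open>\<epsilon> > 0\<close> \<open>h > 0\<close>
    by (auto simp: eventually_at_top_linorder dist_real_def)
  show "eventually (\<lambda>x. dist (p x) 0 < \<epsilon>) at_top"
    unfolding eventually_at_top_linorder
  proof (intro exI[of _ "max N T"] allI impI)
    fix t assume t: "max N T \<le> t"
    obtain \<xi> where \<xi>: "t < \<xi>" "\<xi> < t + h" "f (t + h) - f t = h * p \<xi>"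
      using MVT2[of t "t + h" f p] df t \<open>h > 0\<close> by auto
    have "\<bar>f t - L\<bar> < \<epsilon> * h / 4" "\<bar>f (t + h) - L\<bar> < \<epsilon> * h / 4"
      using N t \<open>h > 0\<close> by auto
    then have "\<bar>f (t + h) - f t\<bar> < \<epsilon> * h / 2"
      unfolding abs_less_iff by linarith
    then have p\<xi>: "\<bar>p \<xi>\<bar> < \<epsilon> / 2"
      using \<xi>(3) \<open>h > 0\<close> by (simp add: abs_mult)
    obtain \<zeta> where \<zeta>: "t < \<zeta>" "\<zeta> < \<xi>" "p \<xi> - p t = (\<xi> - t) * q \<zeta>"
      using MVT2[of t \<xi> p q] dp t \<xi> by auto
    have "\<bar>q \<zeta>\<bar> \<le> B'"
      using q_bdd[rule_format, of \<zeta>] \<zeta> t by (simp add: B'_def)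
    then have "\<bar>p \<xi> - p t\<bar> \<le> h * B'"
      unfolding \<zeta>(3) abs_mult using \<xi> \<zeta> by (intro mult_mono) auto
    with p\<xi> \<open>h * B' = \<epsilon> / 2\<close> show "dist (p t) 0 < \<epsilon>"
      by (auto simp: dist_real_def abs_le_iff abs_less_iff)
  qed
qed

definition eventually_no_interior_max_above :: "real \<Rightarrow> (real \<Rightarrow> real) \<Rightarrow> bool" where
  "eventually_no_interior_max_above c w \<longleftrightarrow>
     (\<forall>\<epsilon>>0. \<exists>T. \<forall>a x b. T \<le> a \<longrightarrow> a < x \<longrightarrow> x < b \<longrightarrow> w x \<le> max (max (w a) (w b)) (c + \<epsilon>))"

lemma eventually_no_interior_max_above_if_critical:
  fixes f p q h :: "real \<Rightarrow> real"
  assumes df: "\<forall>x\<ge>T. (f has_real_derivative p x) (at x)"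
    and dp: "\<forall>x\<ge>T. (p has_real_derivative q x) (at x)"
    and h: "(h \<longlongrightarrow> c) at_top"
    and crit: "\<forall>x\<ge>T. p x = 0 \<longrightarrow> q x \<le> 0 \<longrightarrow> f x \<le> h x"
  shows "eventually_no_interior_max_above c f"
  unfolding eventually_no_interior_max_above_def
proof (intro allI impI)
  fix \<epsilon> :: real assume "\<epsilon> > 0"
  then obtain Th where Th: "\<forall>x\<ge>Th. h x < c + \<epsilon>"
    using order_tendstoD(2)[OF h, of "c + \<epsilon>"] by (auto simp: eventually_at_top_linorder)
  show "\<exists>T'. \<forall>a x b. T' \<le> a \<longrightarrow> a < x \<longrightarrow> x < b \<longrightarrow> f x \<le> max (max (f a) (f b)) (c + \<epsilon>)"
  proof (intro exI[of _ "max T Th"] allI impI)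
    fix a x b assume a: "max T Th \<le> a" and "a < x" "x < b"
    have df': "\<forall>y\<in>{a..b}. (f has_real_derivative p y) (at y)"
      and dp': "\<forall>y\<in>{a..b}. (p has_real_derivative q y) (at y)"
      using df dp a by auto
    then have "continuous_on {a..b} f"
      by (meson DERIV_isCont continuous_at_imp_continuous_on)
    then obtain z where z: "z \<in> {a..b}" "\<forall>y\<in>{a..b}. f y \<le> f z"
      using continuous_attains_sup[of "{a..b}" f] \<open>a < x\<close> \<open>x < b\<close> by auto
    have "f z \<le> max (max (f a) (f b)) (c + \<epsilon>)"
    proof (cases "z = a \<or> z = b")
      case False
      with z have "a < z" "z < b" by auto
      then have "p z = 0" "q z \<le> 0"
        using DERIV_interior_max[OF _ _ df' dp' z(2)] by auto
      then have "f z \<le> h z" using crit a z by auto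
      also have "h z < c + \<epsilon>" using Th a z by auto
      finally show ?thesis by simp
    qed auto
    moreover have "f x \<le> f z" using z \<open>a < x\<close> \<open>x < b\<close> by auto
    ultimately show "f x \<le> max (max (f a) (f b)) (c + \<epsilon>)" by linarith
  qed
qed

lemma frequently_above_le_if_no_interior_max_above:
  fixes w :: "real \<Rightarrow> real"
  assumes "eventually_no_interior_max_above c w" "lo \<le> hi"
    and below: "\<exists>\<^sub>F x in at_top. w x < lo" and above: "\<exists>\<^sub>F x in at_top. hi < w x"
  shows "hi \<le> c"
proof (rule field_le_epsilon)
  fix \<epsilon> :: real assume "0 < \<epsilon>"
  then obtain T where T: "\<forall>a x b. T \<le> a \<longrightarrow> a < x \<longrightarrow> x < b \<longrightarrow> w x \<le> max (max (w a) (w b)) (c + \<epsilon>)"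
    using assms(1) unfolding eventually_no_interior_max_above_def by blast
  have below': "\<exists>x\<ge>S. w x < lo" and above': "\<exists>x\<ge>S. hi < w x" for S
    using below above by (auto simp: frequently_def eventually_at_top_linorder)
  obtain a where a: "T \<le> a" "w a < lo" using below' by blast
  obtain x where x: "a + 1 \<le> x" "hi < w x" using above' by blast
  obtain b where b: "x + 1 \<le> b" "w b < lo" using below' by blast
  have "w x \<le> max (max (w a) (w b)) (c + \<epsilon>)"
    using T a x b by simp
  with a x b \<open>lo \<le> hi\<close> show "hi \<le> c + \<epsilon>"
    by (simp add: max_def split: if_splits)
qed

lemma frequently_greater_if_less_Limsup:
  fixes w :: "'a \<Rightarrow> real"
  assumes "ereal y < Limsup F (\<lambda>x. ereal (w x))"
  shows "\<exists>\<^sub>F x in F. y < w x"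
proof (rule ccontr)
  assume "\<not> (\<exists>\<^sub>F x in F. y < w x)"
  then have "\<forall>\<^sub>F x in F. ereal (w x) \<le> ereal y"
    by (simp add: not_frequently not_less)
  then have "Limsup F (\<lambda>x. ereal (w x)) \<le> ereal y"
    by (rule Limsup_bounded)
  with assms show False by simp
qed

lemma frequently_less_if_Liminf_less:
  fixes w :: "'a \<Rightarrow> real"
  assumes "Liminf F (\<lambda>x. ereal (w x)) < ereal y"
  shows "\<exists>\<^sub>F x in F. w x < y"
proof (rule ccontr)
  assume "\<not> (\<exists>\<^sub>F x in F. w x < y)"
  then have "\<forall>\<^sub>F x in F. ereal y \<le> ereal (w x)"
    by (simp add: not_frequently not_less)
  then have "ereal y \<le> Liminf F (\<lambda>x. ereal (w x))"
    by (rule Liminf_bounded)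
  with assms show False by simp
qed

lemma bounded_no_interior_extrema_imp_convergent:
  fixes w :: "real \<Rightarrow> real"
  assumes bdd: "\<forall>x\<ge>T. m \<le> w x \<and> w x \<le> M"
    and max: "eventually_no_interior_max_above c w"
    and min: "eventually_no_interior_max_above (- c) (\<lambda>x. - w x)"
  shows "\<exists>L. (w \<longlongrightarrow> L) at_top"
proof -
  define sup where "sup = Limsup at_top (\<lambda>x. ereal (w x))"
  define inf where "inf = Liminf at_top (\<lambda>x. ereal (w x))"
  have ev_bdd: "\<forall>\<^sub>F x in at_top. m \<le> w x \<and> w x \<le> M"
    using bdd by (auto simp: eventually_at_top_linorder)
  have "sup \<le> ereal M" unfolding sup_def
    by (rule Limsup_bounded) (use ev_bdd in \<open>auto elim: eventually_mono\<close>)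
  moreover have "ereal m \<le> inf" unfolding inf_def
    by (rule Liminf_bounded) (use ev_bdd in \<open>auto elim: eventually_mono\<close>)
  moreover have "inf \<le> sup"
    unfolding inf_def sup_def by (rule Liminf_le_Limsup) simp
  ultimately obtain s i where s: "sup = ereal s" and i: "inf = ereal i" and "i \<le> s"
    by (cases sup; cases inf) auto
  have "\<not> i < s"
  proof
    assume "i < s"
    define d where "d = (s - i) / 4"
    have "i + d \<le> s - d"
      using \<open>i < s\<close> by (simp add: d_def field_simps)
    have above: "\<exists>\<^sub>F x in at_top. s - d < w x"
      using s \<open>i < s\<close> unfolding sup_def by (intro frequently_greater_if_less_Limsup) (simp add: d_def)
    have below: "\<exists>\<^sub>F x in at_top. w x < i + d"
      using i \<open>i < s\<close> unfolding inf_def by (intro frequently_less_if_Liminf_less) (simp add: d_def)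
    have "s - d \<le> c"
      using max \<open>i + d \<le> s - d\<close> below above by (rule frequently_above_le_if_no_interior_max_above)
    moreover have "- (i + d) \<le> - c"
    proof (rule frequently_above_le_if_no_interior_max_above[OF min])
      show "- (s - d) \<le> - (i + d)"
        using \<open>i + d \<le> s - d\<close> by simp
      show "\<exists>\<^sub>F x in at_top. - w x < - (s - d)" "\<exists>\<^sub>F x in at_top. - (i + d) < - w x"
        unfolding neg_less_iff_less by (fact above, fact below)
    qed
    ultimately show False
      using \<open>i < s\<close> unfolding d_def by (simp add: field_simps)
  qed
  with \<open>i \<le> s\<close> have "((\<lambda>x. ereal (w x)) \<longlongrightarrow> ereal s) at_top"
    using s i unfolding sup_def inf_def by (intro Liminf_eq_Limsup) auto
  then show ?thesis by auto
qed

lemma increment_ge_if_DERIV_ge: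
  fixes g g' :: "real \<Rightarrow> real"
  assumes "s \<le> t" "\<forall>x\<in>{s..t}. (g has_real_derivative g' x) (at x)" "\<forall>x\<in>{s..t}. P \<le> g' x"
  shows "(t - s) * P \<le> g t - g s"
proof -
  have "(\<lambda>x. g x - P * x) s \<le> (\<lambda>x. g x - P * x) t"
  proof (rule DERIV_nonneg_imp_nondecreasing[OF \<open>s \<le> t\<close>])
    fix x assume "s \<le> x" "x \<le> t"
    with assms have "((\<lambda>x. g x - P * x) has_real_derivative g' x - P) (at x)" "0 \<le> g' x - P"
      by (auto intro!: derivative_eq_intros)
    then show "\<exists>y. ((\<lambda>x. g x - P * x) has_real_derivative y) (at x) \<and> 0 \<le> y" by blast
  qed
  then show ?thesis by (simp add: algebra_simps)
qed

lemma derivative_below_if_pushed_up: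
  fixes f p q :: "real \<Rightarrow> real"
  assumes df: "\<forall>x\<ge>T. (f has_real_derivative p x) (at x)"
    and dp: "\<forall>x\<ge>T. (p has_real_derivative q x) (at x)"
    and bdd: "\<forall>x\<ge>T. m \<le> f x \<and> f x \<le> M"
    and "0 < P" and q_pos: "\<forall>x\<ge>T. P \<le> p x \<longrightarrow> 0 < q x"
    and "T \<le> t"
  shows "p t < P"
proof (rule ccontr)
  assume "\<not> p t < P"
  define D where "D = (M - m) / P + 1"
  have "m \<le> M" using bdd by auto
  then have "0 < D" "M - m < D * P"
    using \<open>0 < P\<close> by (auto simp: D_def field_simps add_nonneg_pos)
  \<comment> \<open>p stays above P from t on, so f would increase by more than M - m over [t, t + D]\<close>
  have "P \<le> p x" if "x \<in> {t..t + D}" for x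
  proof (rule DERIV_pos_stays_above[of t x p q P])
    show "\<forall>y\<in>{t..x}. (p has_real_derivative q y) (at y)"
      and "\<forall>y\<in>{t..x}. P \<le> p y \<longrightarrow> 0 < q y"
      using dp q_pos \<open>T \<le> t\<close> by auto
  qed (use that \<open>\<not> p t < P\<close> in auto)
  then have "D * P \<le> f (t + D) - f t"
    using increment_ge_if_DERIV_ge[of t "t + D" f p P] \<open>T \<le> t\<close> \<open>0 < D\<close> df by simp
  moreover have "f (t + D) \<le> M" "m \<le> f t"
    using bdd \<open>T \<le> t\<close> \<open>0 < D\<close> by auto
  ultimately show False
    using \<open>M - m < D * P\<close> by linarith
qed

lemma derivative_above_if_pushed_down:
  fixes f p q :: "real \<Rightarrow> real"
  assumes df: "\<forall>x\<ge>T. (f has_real_derivative p x) (at x)"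
    and dp: "\<forall>x\<ge>T. (p has_real_derivative q x) (at x)"
    and bdd: "\<forall>x\<ge>T. m \<le> f x \<and> f x \<le> M"
    and "0 < P" and q_pos: "\<forall>x\<ge>T. p x \<le> - P \<longrightarrow> 0 < q x"
    and "T + ((M - m) / P + 1) \<le> t"
  shows "- P < p t"
proof (rule ccontr)
  assume "\<not> - P < p t"
  define D where "D = (M - m) / P + 1"
  have "m \<le> M" using bdd by auto
  then have "0 < D" "M - m < D * P"
    using \<open>0 < P\<close> by (auto simp: D_def field_simps add_nonneg_pos)
  \<comment> \<open>p stays below -P up to t, so f would decrease by more than M - m over [T, t]\<close>
  have "P \<le> - p x" if "x \<in> {T..t}" for x
  proof -
    have "p x \<le> - P"
    proof (rule DERIV_pos_stays_below[of x t p q "- P"])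
      show "\<forall>y\<in>{x..t}. (p has_real_derivative q y) (at y)"
        and "\<forall>y\<in>{x..t}. p y \<le> - P \<longrightarrow> 0 < q y"
        using dp q_pos that by auto
    qed (use that \<open>\<not> - P < p t\<close> in auto)
    then show ?thesis by simp
  qed
  moreover have "\<forall>x\<in>{T..t}. ((\<lambda>x. - f x) has_real_derivative - p x) (at x)"
    using df by (auto intro: DERIV_minus)
  ultimately have "(t - T) * P \<le> f T - f t"
    using increment_ge_if_DERIV_ge[of T t "\<lambda>x. - f x" "\<lambda>x. - p x" P] assms(6) \<open>0 < D\<close>
    by (simp add: D_def)
  moreover have "D * P \<le> (t - T) * P"
    using assms(6) \<open>0 < P\<close> by (simp add: D_def)
  moreover have "f T \<le> M" "m \<le> f t"
    using bdd assms(6) \<open>0 < D\<close> by (auto simp: D_def)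
  ultimately show False
    using \<open>M - m < D * P\<close> by linarith
qed

lemma eventually_abs_derivative_less:
  fixes f p q :: "real \<Rightarrow> real"
  assumes df: "\<forall>x\<ge>T. (f has_real_derivative p x) (at x)"
    and dp: "\<forall>x\<ge>T. (p has_real_derivative q x) (at x)"
    and bdd: "\<forall>x\<ge>T. m \<le> f x \<and> f x \<le> M"
    and "0 < P" and q_pos: "\<forall>x\<ge>T. P \<le> \<bar>p x\<bar> \<longrightarrow> 0 < q x"
  shows "\<forall>\<^sub>F x in at_top. \<bar>p x\<bar> < P"
proof -
  have "m \<le> M" using bdd by auto
  with \<open>0 < P\<close> have "T \<le> T + ((M - m) / P + 1)"
    by (simp add: add_nonneg_pos)
  then have "\<bar>p x\<bar> < P" if "T + ((M - m) / P + 1) \<le> x" for x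
    using derivative_below_if_pushed_up[OF df dp bdd \<open>0 < P\<close>, of x]
      derivative_above_if_pushed_down[OF df dp bdd \<open>0 < P\<close> _ that] q_pos that
    unfolding abs_less_iff by auto
  then show ?thesis
    by (auto simp: eventually_at_top_linorder)
qed

section \<open>A Riccati equation for a bounded function\<close>

lemma quadratic_pos_if_large:
  fixes \<beta> k z x b0 K W :: real
  assumes "0 < b0" "b0 \<le> \<beta>" "\<bar>k\<bar> \<le> K" "\<bar>z\<bar> \<le> W" and large: "(K + W) / b0 + 1 \<le> \<bar>x\<bar>"
  shows "0 < \<beta> * x\<^sup>2 - k * x + z"
proof -
  have "0 \<le> (K + W) / b0" using assms by (intro divide_nonneg_pos) auto
  with large have "1 \<le> \<bar>x\<bar>" by linarith
  have "K + W + b0 \<le> b0 * \<bar>x\<bar>"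
    using large \<open>0 < b0\<close> by (simp add: field_simps)
  have "K * \<bar>x\<bar> + W + b0 \<le> K * \<bar>x\<bar> + (W + b0) * \<bar>x\<bar>"
    using mult_left_mono[OF \<open>1 \<le> \<bar>x\<bar>\<close>, of "W + b0"] assms by simp
  also have "\<dots> = (K + W + b0) * \<bar>x\<bar>" by (simp add: algebra_simps)
  also have "\<dots> \<le> b0 * \<bar>x\<bar> * \<bar>x\<bar>"
    using mult_right_mono[OF \<open>K + W + b0 \<le> b0 * \<bar>x\<bar>\<close> abs_ge_zero] .
  also have "\<dots> \<le> \<beta> * x\<^sup>2"
    using mult_right_mono[OF \<open>b0 \<le> \<beta>\<close>, of "x\<^sup>2"] by (simp add: power2_eq_square abs_mult_self_eq mult.assoc)
  finally have "K * \<bar>x\<bar> + W + b0 \<le> \<beta> * x\<^sup>2" .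
  moreover have "k * x \<le> K * \<bar>x\<bar>"
    using mult_right_mono[OF \<open>\<bar>k\<bar> \<le> K\<close> abs_ge_zero, of x] abs_ge_self[of "k * x"]
    by (simp add: abs_mult)
  ultimately show ?thesis using assms by (simp add: abs_le_iff)
qed

lemma abs_quadratic_le:
  fixes G \<beta> k z x G1 B1 K W P :: real
  assumes "0 < G" "G \<le> G1" "0 \<le> \<beta>" "\<beta> \<le> B1" "\<bar>k\<bar> \<le> K" "\<bar>z\<bar> \<le> W" "\<bar>x\<bar> \<le> P"
  shows "\<bar>G * (\<beta> * x\<^sup>2 - k * x + z)\<bar> \<le> G1 * (B1 * P\<^sup>2 + K * P + W)"
proof -
  have "x\<^sup>2 \<le> P\<^sup>2"
    using power_mono[OF \<open>\<bar>x\<bar> \<le> P\<close>, of 2] by simp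
  then have "\<beta> * x\<^sup>2 \<le> B1 * P\<^sup>2"
    using assms by (intro mult_mono) auto
  moreover have "\<bar>k * x\<bar> \<le> K * P"
    unfolding abs_mult using assms by (intro mult_mono) auto
  moreover have "0 \<le> \<beta> * x\<^sup>2" using assms by simp
  ultimately have "\<bar>\<beta> * x\<^sup>2 - k * x + z\<bar> \<le> B1 * P\<^sup>2 + K * P + W"
    using \<open>\<bar>z\<bar> \<le> W\<close> unfolding abs_le_iff by linarith
  then show ?thesis
    unfolding abs_mult using assms by (intro mult_mono) auto
qed

lemma riccati_second_derivative_eventually_bounded:
  fixes f p q G \<beta> k z :: "real \<Rightarrow> real"
  assumes df: "\<forall>x\<ge>T. (f has_real_derivative p x) (at x)"
    and dp: "\<forall>x\<ge>T. (p has_real_derivative q x) (at x)"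
    and f_bdd: "\<forall>x\<ge>T. m \<le> f x \<and> f x \<le> M"
    and q_eq: "\<forall>x\<ge>T. q x = G x * (\<beta> x * (p x)\<^sup>2 - k x * p x + z x)"
    and coeffs: "\<forall>x\<ge>T. 0 < G x \<and> G x \<le> G1 \<and> b0 \<le> \<beta> x \<and> \<beta> x \<le> B1 \<and> \<bar>k x\<bar> \<le> K \<and> \<bar>z x\<bar> \<le> W"
    and "0 < b0"
  shows "\<exists>Bq. \<forall>\<^sub>F x in at_top. \<bar>q x\<bar> \<le> Bq"
proof -
  define P where "P = (K + W) / b0 + 1"
  have "0 \<le> K" "0 \<le> W"
    using coeffs[rule_format, of T] by auto
  with \<open>0 < b0\<close> have "0 < P"
    by (simp add: P_def add_nonneg_pos)
  have "\<forall>x\<ge>T. P \<le> \<bar>p x\<bar> \<longrightarrow> 0 < q x"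
    using coeffs q_eq quadratic_pos_if_large[OF \<open>0 < b0\<close>] by (auto simp: P_def)
  then have "\<forall>\<^sub>F x in at_top. \<bar>p x\<bar> < P"
    by (rule eventually_abs_derivative_less[OF df dp f_bdd \<open>0 < P\<close>])
  then have "\<forall>\<^sub>F x in at_top. \<bar>q x\<bar> \<le> G1 * (B1 * P\<^sup>2 + K * P + W)"
    using eventually_ge_at_top[of T]
  proof eventually_elim
    case (elim x)
    then show ?case
      unfolding q_eq[rule_format, OF \<open>T \<le> x\<close>] using coeffs \<open>0 < b0\<close>
      by (intro abs_quadratic_le) auto
  qed
  then show ?thesis by blast
qed

lemma bounded_convergent_by_maximum_principle:
  fixes f p q G \<Psi> :: "real \<Rightarrow> real"
  assumes df: "\<forall>x\<ge>T. (f has_real_derivative p x) (at x)"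
    and dp: "\<forall>x\<ge>T. (p has_real_derivative q x) (at x)"
    and f_bdd: "\<forall>x\<ge>T. m \<le> f x \<and> f x \<le> M"
    and crit: "\<forall>x\<ge>T. p x = 0 \<longrightarrow> q x = G x * (exp (f x) - \<Psi> x)"
    and pos: "\<forall>x\<ge>T. 0 < G x \<and> 0 < \<Psi> x" and \<Psi>: "(\<Psi> \<longlongrightarrow> 1) at_top"
  shows "\<exists>L. (f \<longlongrightarrow> L) at_top"
proof -
  have ln_\<Psi>: "((\<lambda>x. ln (\<Psi> x)) \<longlongrightarrow> 0) at_top"
    using tendsto_ln[OF \<Psi>] by simp
  have "eventually_no_interior_max_above 0 f"
    using df dp ln_\<Psi> by (rule eventually_no_interior_max_above_if_critical)
      (use crit pos in \<open>auto simp: ln_ge_iff mult_le_0_iff\<close>)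
  moreover have "eventually_no_interior_max_above (- 0) (\<lambda>x. - f x)"
  proof (rule eventually_no_interior_max_above_if_critical)
    show "\<forall>x\<ge>T. ((\<lambda>x. - f x) has_real_derivative - p x) (at x)"
      and "\<forall>x\<ge>T. ((\<lambda>x. - p x) has_real_derivative - q x) (at x)"
      using df dp by (auto intro: DERIV_minus)
    show "((\<lambda>x. - ln (\<Psi> x)) \<longlongrightarrow> - 0) at_top"
      using tendsto_minus[OF ln_\<Psi>] .
    show "\<forall>x\<ge>T. - p x = 0 \<longrightarrow> - q x \<le> 0 \<longrightarrow> - f x \<le> - ln (\<Psi> x)"
    proof (intro allI impI)
      fix x assume "T \<le> x" "- p x = 0" "- q x \<le> 0"
      then have "\<Psi> x \<le> exp (f x)" "0 < \<Psi> x"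
        using crit pos by (auto simp: zero_le_mult_iff)
      then have "ln (\<Psi> x) \<le> ln (exp (f x))"
        by (subst ln_le_cancel_iff) auto
      then show "- f x \<le> - ln (\<Psi> x)" by simp
    qed
  qed
  ultimately show ?thesis
    using bounded_no_interior_extrema_imp_convergent[OF f_bdd] by blast
qed

lemma riccati_derivative_tendsto_0:
  fixes f p q G \<beta> k \<Psi> :: "real \<Rightarrow> real"
  assumes df: "\<forall>x\<ge>T. (f has_real_derivative p x) (at x)"
    and dp: "\<forall>x\<ge>T. (p has_real_derivative q x) (at x)"
    and f_bdd: "\<forall>x\<ge>T. m \<le> f x \<and> f x \<le> M"
    and q_eq: "\<forall>x\<ge>T. q x = G x * (\<beta> x * (p x)\<^sup>2 - k x * p x + (exp (f x) - \<Psi> x))"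
    and coeffs: "\<forall>\<^sub>F x in at_top. 0 < G x \<and> G x \<le> G1 \<and> b0 \<le> \<beta> x \<and> \<beta> x \<le> B1 \<and> \<bar>k x\<bar> \<le> K"
    and "0 < b0" and \<Psi>: "(\<Psi> \<longlongrightarrow> 1) at_top"
  shows "(p \<longlongrightarrow> 0) at_top"
proof -
  define W where "W = exp M + 2"
  have "\<forall>\<^sub>F x in at_top. T \<le> x \<and> 0 < G x \<and> G x \<le> G1 \<and> b0 \<le> \<beta> x \<and> \<beta> x \<le> B1 \<and> \<bar>k x\<bar> \<le> K
      \<and> 0 < \<Psi> x \<and> \<bar>exp (f x) - \<Psi> x\<bar> \<le> W"
    using coeffs tendstoD[OF \<Psi> zero_less_one] eventually_ge_at_top[of T]
  proof eventually_elim
    case (elim x)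
    then have "exp (f x) \<le> exp M" "0 < exp (f x)" "0 < \<Psi> x" "\<Psi> x < 2"
      using f_bdd by (auto simp: dist_real_def abs_less_iff)
    then have "\<bar>exp (f x) - \<Psi> x\<bar> \<le> W"
      unfolding W_def abs_le_iff by linarith
    with elim \<open>0 < \<Psi> x\<close> show ?case by auto
  qed
  then obtain T' where T': "\<forall>x\<ge>T'. T \<le> x \<and> 0 < G x \<and> G x \<le> G1 \<and> b0 \<le> \<beta> x \<and> \<beta> x \<le> B1
      \<and> \<bar>k x\<bar> \<le> K \<and> 0 < \<Psi> x \<and> \<bar>exp (f x) - \<Psi> x\<bar> \<le> W"
    by (auto simp: eventually_at_top_linorder)
  have df': "\<forall>x\<ge>T'. (f has_real_derivative p x) (at x)"
    and dp': "\<forall>x\<ge>T'. (p has_real_derivative q x) (at x)"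
    and f_bdd': "\<forall>x\<ge>T'. m \<le> f x \<and> f x \<le> M"
    and q_eq': "\<forall>x\<ge>T'. q x = G x * (\<beta> x * (p x)\<^sup>2 - k x * p x + (exp (f x) - \<Psi> x))"
    using df dp f_bdd q_eq T' by auto
  have "\<forall>x\<ge>T'. 0 < G x \<and> G x \<le> G1 \<and> b0 \<le> \<beta> x \<and> \<beta> x \<le> B1 \<and> \<bar>k x\<bar> \<le> K
      \<and> \<bar>exp (f x) - \<Psi> x\<bar> \<le> W"
    using T' by auto
  then have "\<exists>Bq. \<forall>\<^sub>F x in at_top. \<bar>q x\<bar> \<le> Bq"
    by (rule riccati_second_derivative_eventually_bounded[OF df' dp' f_bdd' q_eq' _ \<open>0 < b0\<close>])
  then obtain Bq Tq where "\<forall>x\<ge>Tq. \<bar>q x\<bar> \<le> Bq"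
    by (auto simp: eventually_at_top_linorder)
  moreover have "\<exists>L. (f \<longlongrightarrow> L) at_top"
  proof (rule bounded_convergent_by_maximum_principle[OF df' dp' f_bdd' _ _ \<Psi>])
    show "\<forall>x\<ge>T'. p x = 0 \<longrightarrow> q x = G x * (exp (f x) - \<Psi> x)"
      using q_eq' by simp
    show "\<forall>x\<ge>T'. 0 < G x \<and> 0 < \<Psi> x"
      using T' by simp
  qed
  then obtain L where "(f \<longlongrightarrow> L) at_top" ..
  ultimately show ?thesis
    using df' dp' by (intro barbalat_lemma[of "max T' Tq" f p q Bq L]) auto
qed

section \<open>The logarithmic derivative of the solution\<close>

lemma log_ratio_second_derivative_eq:
  fixes B A D U U1 U2 E E1 E2 :: real
  assumes "B \<noteq> 0" "0 < U" "0 < E"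
    and ode: "0 = 1/2 * B\<^sup>2 * U2 + A * U1 + E * U - U\<^sup>2 - D * U1\<^sup>2 / U"
  shows "(U2 * U - U1\<^sup>2) / U\<^sup>2 - (E2 * E - E1\<^sup>2) / E\<^sup>2
    = 2 * E / B\<^sup>2 * ((D - B\<^sup>2 / 2) / E * (U1 / U - E1 / E)\<^sup>2
        - (A / E + (B\<^sup>2 - 2 * D) * E1 / E\<^sup>2) * (U1 / U - E1 / E) + (U / E - Psi_val B A D E E1 E2))"
proof -
  define v where "v = U1 / U"
  define w where "w = E1 / E"
  have U1: "U1 = v * U" and E1: "E1 = w * E"
    using assms(2,3) by (simp_all add: v_def w_def)
  have u2: "U2 / U = 2 / B\<^sup>2 * (D * v\<^sup>2 - A * v + U - E)"
    using assms(1,2) ode unfolding U1 by (simp add: field_simps power2_eq_square)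
  have e2: "E2 / E = 2 / B\<^sup>2 * (E * (Psi_val B A D E E1 E2 - 1) + D * w\<^sup>2 - A * w)"
    using assms(1,3) unfolding Psi_val_def E1 by (simp add: field_simps power2_eq_square power3_eq_cube)
  have "(U2 * U - U1\<^sup>2) / U\<^sup>2 - (E2 * E - E1\<^sup>2) / E\<^sup>2 = U2 / U - v\<^sup>2 - E2 / E + w\<^sup>2"
    using assms(2,3) unfolding U1 E1 by (simp add: field_simps power2_eq_square)
  also have "\<dots> = 2 * E / B\<^sup>2 * ((D - B\<^sup>2 / 2) / E * (v - w)\<^sup>2
        - (A / E + (B\<^sup>2 - 2 * D) * w / E) * (v - w) + (U / E - Psi_val B A D E E1 E2))"
    unfolding u2 e2 using assms(1,3) by (simp add: field_simps power2_eq_square)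
  finally show ?thesis
    using assms(3) by (simp add: v_def w_def power2_eq_square)
qed

lemma riccati_coefficient_bounds:
  fixes E B D \<kappa> \<Lambda> K2 :: real
  assumes "0 < E" "B \<noteq> 0" "0 < \<kappa>" "0 < K2"
    and D: "(1 + \<kappa>) * B\<^sup>2 / 2 \<le> D" "D \<le> \<Lambda> * B\<^sup>2 / 2" and "K2 / 2 < D / E"
  shows "0 < 2 * E / B\<^sup>2" "2 * E / B\<^sup>2 \<le> 2 * \<Lambda> / K2"
    "\<kappa> * K2 / (2 * \<Lambda>) \<le> (D - B\<^sup>2 / 2) / E" "(D - B\<^sup>2 / 2) / E \<le> D / E"
proof -
  define r where "r = B\<^sup>2 / E"
  have "0 < r" using assms by (simp add: r_def)
  have "(1 + \<kappa>) * B\<^sup>2 / 2 / E \<le> D / E" "D / E \<le> \<Lambda> * B\<^sup>2 / 2 / E"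
    using D \<open>0 < E\<close> by (intro divide_right_mono; simp)+
  then have "(1 + \<kappa>) * r / 2 \<le> D / E" "D / E \<le> \<Lambda> * r / 2"
    by (simp_all add: r_def)
  with \<open>K2 / 2 < D / E\<close> have "K2 < \<Lambda> * r" by linarith
  with \<open>0 < K2\<close> have "0 < \<Lambda> * r" by linarith
  with \<open>0 < r\<close> have "0 < \<Lambda>" by (simp add: zero_less_mult_iff)
  have G: "2 * E / B\<^sup>2 = 2 / r" by (simp add: r_def)
  show "0 < 2 * E / B\<^sup>2" "2 * E / B\<^sup>2 \<le> 2 * \<Lambda> / K2"
    unfolding G using \<open>K2 < \<Lambda> * r\<close> \<open>0 < r\<close> \<open>0 < K2\<close> by (simp_all add: field_simps)
  have "(D - B\<^sup>2 / 2) / E = D / E - r / 2"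
    by (simp add: r_def diff_divide_distrib)
  moreover have "\<kappa> * K2 / (2 * \<Lambda>) \<le> \<kappa> * r / 2"
    using \<open>K2 < \<Lambda> * r\<close> \<open>0 < \<Lambda>\<close> \<open>0 < \<kappa>\<close> by (simp add: field_simps)
  ultimately show "\<kappa> * K2 / (2 * \<Lambda>) \<le> (D - B\<^sup>2 / 2) / E" "(D - B\<^sup>2 / 2) / E \<le> D / E"
    using \<open>(1 + \<kappa>) * r / 2 \<le> D / E\<close> \<open>0 < r\<close> by (simp_all add: algebra_simps)
qed

lemma riccati_coefficients_eventually_bounded:
  fixes \<eta> B D k :: "real \<Rightarrow> real"
  assumes \<eta>_pos: "\<forall>y\<ge>y0. 0 < \<eta> y" and B_nz: "\<forall>y\<ge>y0. B y \<noteq> 0"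
    and D_bounds: "\<forall>y\<ge>y0. (1 + \<kappa>) * (B y)\<^sup>2 / 2 \<le> D y \<and> D y \<le> \<Lambda> * (B y)\<^sup>2 / 2" and "0 < \<kappa>"
    and lim_D: "((\<lambda>y. D y / \<eta> y) \<longlongrightarrow> K2) at_top" and "K2 \<noteq> 0"
    and lim_k: "(k \<longlongrightarrow> K1) at_top"
  shows "\<exists>b0>0. \<forall>\<^sub>F y in at_top. 0 < 2 * \<eta> y / (B y)\<^sup>2 \<and> 2 * \<eta> y / (B y)\<^sup>2 \<le> 2 * \<Lambda> / K2
      \<and> b0 \<le> (D y - (B y)\<^sup>2 / 2) / \<eta> y \<and> (D y - (B y)\<^sup>2 / 2) / \<eta> y \<le> 2 * K2 \<and> \<bar>k y\<bar> \<le> \<bar>K1\<bar> + 1"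
proof -
  have "0 \<le> K2"
  proof (rule tendsto_lowerbound[OF lim_D])
    have "0 \<le> D y / \<eta> y" if "y0 \<le> y" for y
    proof -
      have "0 \<le> (1 + \<kappa>) * (B y)\<^sup>2 / 2" using \<open>0 < \<kappa>\<close> by simp
      also have "\<dots> \<le> D y" using D_bounds that by simp
      finally show ?thesis using \<eta>_pos[rule_format, OF that] by simp
    qed
    then show "\<forall>\<^sub>F y in at_top. 0 \<le> D y / \<eta> y"
      by (auto simp: eventually_at_top_linorder)
  qed simp
  with \<open>K2 \<noteq> 0\<close> have "0 < K2" by simp
  then have "K2 / 2 < K2" "K2 < 2 * K2" by simp_all
  have "(1 + \<kappa>) * (B y0)\<^sup>2 \<le> \<Lambda> * (B y0)\<^sup>2"
    using D_bounds[rule_format, of y0] by linarith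
  moreover have "0 < (B y0)\<^sup>2"
    using B_nz by simp
  ultimately have "1 + \<kappa> \<le> \<Lambda>" by simp
  then have "0 < \<kappa> * K2 / (2 * \<Lambda>)"
    using \<open>0 < \<kappa>\<close> \<open>0 < K2\<close> by simp
  moreover have "\<forall>\<^sub>F y in at_top. 0 < 2 * \<eta> y / (B y)\<^sup>2 \<and> 2 * \<eta> y / (B y)\<^sup>2 \<le> 2 * \<Lambda> / K2
      \<and> \<kappa> * K2 / (2 * \<Lambda>) \<le> (D y - (B y)\<^sup>2 / 2) / \<eta> y \<and> (D y - (B y)\<^sup>2 / 2) / \<eta> y \<le> 2 * K2
      \<and> \<bar>k y\<bar> \<le> \<bar>K1\<bar> + 1"
    using eventually_ge_at_top[of y0] order_tendstoD(1)[OF lim_D \<open>K2 / 2 < K2\<close>]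
      order_tendstoD(2)[OF lim_D \<open>K2 < 2 * K2\<close>] tendstoD[OF lim_k zero_less_one]
  proof eventually_elim
    case (elim y)
    then show ?case
      using riccati_coefficient_bounds[of "\<eta> y" "B y" \<kappa> K2 "D y" \<Lambda>] \<eta>_pos B_nz D_bounds \<open>0 < \<kappa>\<close> \<open>0 < K2\<close>
      by (auto simp: dist_real_def)
  qed
  ultimately show ?thesis by blast
qed

lemma log_ratio_has_derivatives:
  fixes u u1 u2 \<eta> \<eta>1 \<eta>2 :: "real \<Rightarrow> real"
  assumes "0 < u y" "0 < \<eta> y"
    and "(u has_real_derivative u1 y) (at y)" "(u1 has_real_derivative u2 y) (at y)"
    and "(\<eta> has_real_derivative \<eta>1 y) (at y)" "(\<eta>1 has_real_derivative \<eta>2 y) (at y)"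
  shows "((\<lambda>y. ln (u y / \<eta> y)) has_real_derivative u1 y / u y - \<eta>1 y / \<eta> y) (at y)"
    and "((\<lambda>y. u1 y / u y - \<eta>1 y / \<eta> y) has_real_derivative
      (u2 y * u y - (u1 y)\<^sup>2) / (u y)\<^sup>2 - (\<eta>2 y * \<eta> y - (\<eta>1 y)\<^sup>2) / (\<eta> y)\<^sup>2) (at y)"
  using assms by (auto intro!: derivative_eq_intros simp: field_simps power2_eq_square)

lemma DERIV_at_within_Ici_imp_at:
  fixes f f' :: "real \<Rightarrow> real"
  assumes "\<forall>x\<ge>y0. (f has_real_derivative f' x) (at x within {y0..})" "y0 < y"
  shows "(f has_real_derivative f' y) (at y)"
proof -
  have "at y within {y0..} = at y"
    using \<open>y0 < y\<close> by (subst at_within_interior) auto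
  moreover have "(f has_real_derivative f' y) (at y within {y0..})"
    using assms by simp
  ultimately show ?thesis by simp
qed

lemma log_derivative_tendsto_0:
  fixes \<eta> \<eta>1 \<eta>2 u u1 u2 A B D :: "real \<Rightarrow> real"
  assumes \<eta>_pos: "\<forall>y\<ge>y0. 0 < \<eta> y"
    and d\<eta>: "\<forall>y\<ge>y0. (\<eta> has_real_derivative \<eta>1 y) (at y within {y0..})"
    and d\<eta>1: "\<forall>y\<ge>y0. (\<eta>1 has_real_derivative \<eta>2 y) (at y within {y0..})"
    and du: "\<forall>y\<ge>y0. (u has_real_derivative u1 y) (at y within {y0..})"
    and du1: "\<forall>y\<ge>y0. (u1 has_real_derivative u2 y) (at y within {y0..})"
    and ode: "\<forall>y\<ge>y0. 0 = 1/2 * (B y)\<^sup>2 * u2 y + A y * u1 y + \<eta> y * u y - (u y)\<^sup>2 - D y * (u1 y)\<^sup>2 / u y"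
    and "0 < C1" and u_bounds: "\<forall>y\<ge>y0. C1 * \<eta> y \<le> u y \<and> u y \<le> C2 * \<eta> y"
    and B_nz: "\<forall>y\<ge>y0. B y \<noteq> 0"
    and D_bounds: "\<forall>y\<ge>y0. (1 + \<kappa>) * (B y)\<^sup>2 / 2 \<le> D y \<and> D y \<le> \<Lambda> * (B y)\<^sup>2 / 2" and "0 < \<kappa>"
    and \<Psi>: "((\<lambda>y. Psi_val (B y) (A y) (D y) (\<eta> y) (\<eta>1 y) (\<eta>2 y)) \<longlongrightarrow> 1) at_top"
    and lim_k: "((\<lambda>y. A y / \<eta> y + ((B y)\<^sup>2 - 2 * D y) * \<eta>1 y / (\<eta> y)\<^sup>2) \<longlongrightarrow> K1) at_top"
    and lim_D: "((\<lambda>y. D y / \<eta> y) \<longlongrightarrow> K2) at_top" and "K2 \<noteq> 0"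
    and lim_\<eta>: "((\<lambda>y. \<eta>1 y / \<eta> y) \<longlongrightarrow> 0) at_top"
  shows "((\<lambda>y. u1 y / u y) \<longlongrightarrow> 0) at_top"
proof -
  define p where "p y = u1 y / u y - \<eta>1 y / \<eta> y" for y
  define q where "q y = (u2 y * u y - (u1 y)\<^sup>2) / (u y)\<^sup>2 - (\<eta>2 y * \<eta> y - (\<eta>1 y)\<^sup>2) / (\<eta> y)\<^sup>2" for y
  have pos: "0 < u y \<and> 0 < \<eta> y" if "y0 \<le> y" for y
    using u_bounds \<eta>_pos \<open>0 < C1\<close> that by (fastforce intro: order_less_le_trans[OF mult_pos_pos])
  have dl: "\<forall>y\<ge>y0 + 1. ((\<lambda>y. ln (u y / \<eta> y)) has_real_derivative p y) (at y)"
    and dp: "\<forall>y\<ge>y0 + 1. (p has_real_derivative q y) (at y)"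
  proof (safe)
    fix y assume "y0 + 1 \<le> y"
    then have "y0 < y" by simp
    with pos[of y] show "((\<lambda>y. ln (u y / \<eta> y)) has_real_derivative p y) (at y)" "(p has_real_derivative q y) (at y)"
      unfolding p_def[abs_def] q_def
      using log_ratio_has_derivatives[of u y \<eta> u1 u2 \<eta>1 \<eta>2] DERIV_at_within_Ici_imp_at[OF du \<open>y0 < y\<close>]
        DERIV_at_within_Ici_imp_at[OF du1 \<open>y0 < y\<close>] DERIV_at_within_Ici_imp_at[OF d\<eta> \<open>y0 < y\<close>]
        DERIV_at_within_Ici_imp_at[OF d\<eta>1 \<open>y0 < y\<close>]
      by auto
  qed
  have l_bdd: "\<forall>y\<ge>y0 + 1. ln C1 \<le> ln (u y / \<eta> y) \<and> ln (u y / \<eta> y) \<le> ln C2"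
  proof (safe)
    fix y assume "y0 + 1 \<le> y"
    then have "C1 \<le> u y / \<eta> y" "u y / \<eta> y \<le> C2" "0 < u y / \<eta> y"
      using u_bounds pos by (auto simp: pos_le_divide_eq pos_divide_le_eq)
    then show "ln C1 \<le> ln (u y / \<eta> y)" "ln (u y / \<eta> y) \<le> ln C2"
      using \<open>0 < C1\<close> by simp_all
  qed
  have q_eq: "\<forall>y\<ge>y0 + 1. q y = 2 * \<eta> y / (B y)\<^sup>2 * ((D y - (B y)\<^sup>2 / 2) / \<eta> y * (p y)\<^sup>2
      - (A y / \<eta> y + ((B y)\<^sup>2 - 2 * D y) * \<eta>1 y / (\<eta> y)\<^sup>2) * p y
      + (exp (ln (u y / \<eta> y)) - Psi_val (B y) (A y) (D y) (\<eta> y) (\<eta>1 y) (\<eta>2 y)))"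
    unfolding q_def p_def using log_ratio_second_derivative_eq B_nz ode pos by simp
  obtain b0 where "0 < b0" and coeffs: "\<forall>\<^sub>F y in at_top. 0 < 2 * \<eta> y / (B y)\<^sup>2
      \<and> 2 * \<eta> y / (B y)\<^sup>2 \<le> 2 * \<Lambda> / K2 \<and> b0 \<le> (D y - (B y)\<^sup>2 / 2) / \<eta> y
      \<and> (D y - (B y)\<^sup>2 / 2) / \<eta> y \<le> 2 * K2
      \<and> \<bar>A y / \<eta> y + ((B y)\<^sup>2 - 2 * D y) * \<eta>1 y / (\<eta> y)\<^sup>2\<bar> \<le> \<bar>K1\<bar> + 1"
    using riccati_coefficients_eventually_bounded[OF \<eta>_pos B_nz D_bounds \<open>0 < \<kappa>\<close> lim_D \<open>K2 \<noteq> 0\<close> lim_k]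
    by blast
  have "(p \<longlongrightarrow> 0) at_top"
    by (rule riccati_derivative_tendsto_0[OF dl dp l_bdd q_eq coeffs \<open>0 < b0\<close> \<Psi>])
  then have "((\<lambda>y. p y + \<eta>1 y / \<eta> y) \<longlongrightarrow> 0 + 0) at_top"
    using lim_\<eta> by (rule tendsto_add)
  then show ?thesis by (simp add: p_def)
qed

lemma d_fun_bounds:
  fixes R :: real and b rho :: "real \<Rightarrow> real"
  assumes "0 < R" "-1 \<le> rho y" "rho y \<le> 1"
  shows "(1 + min R 1) * (b y)\<^sup>2 / 2 \<le> d_fun R b rho y \<and> d_fun R b rho y \<le> (R + 2) * (b y)\<^sup>2 / 2"
proof -
  define s where "s = (rho y)\<^sup>2"
  define c where "c = (1 - s) * R + s + 1"
  have "0 \<le> s" "s \<le> 1"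
    using assms abs_square_le_1[of "rho y"] by (auto simp: s_def)
  then have "1 + min R 1 \<le> c"
    using mult_left_mono[OF min.cobounded1[of R 1], of "1 - s"] mult_left_mono[OF min.cobounded2[of R 1], of s]
    by (simp add: c_def algebra_simps)
  moreover have "0 \<le> s * R"
    using \<open>0 < R\<close> \<open>0 \<le> s\<close> by simp
  then have "c \<le> R + 2"
    using \<open>s \<le> 1\<close> by (simp add: c_def left_diff_distrib)
  ultimately have "(1 + min R 1) * (b y)\<^sup>2 \<le> c * (b y)\<^sup>2" "c * (b y)\<^sup>2 \<le> (R + 2) * (b y)\<^sup>2"
    by (simp_all add: mult_right_mono)
  then show ?thesis
    unfolding d_fun_def s_def[symmetric] c_def[symmetric] by (simp add: mult.commute)
qed

theorem corollary4p12:
  fixes Em :: ereal and E :: "real set"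
    and r lam sigma a b rho delta :: "real \<Rightarrow> real" and R :: real
    and y0 :: real and eta1 eta2 u u1 u2 :: "real \<Rightarrow> real"
    and C1 C2 K1 K2 :: real
  assumes E_def: "E = {y. Em < ereal y}" and Em_fin: "Em \<noteq> \<infinity>"
    and lip: "loc_lip_on E r" "loc_lip_on E lam" "loc_lip_on E sigma" "loc_lip_on E a"
             "loc_lip_on E b" "loc_lip_on E rho" "loc_lip_on E delta"
    and sigma_pos: "\<forall>y\<in>E. sigma y > 0"
    and b_nz: "\<forall>y\<in>E. b y \<noteq> 0"
    and rho_range: "\<forall>y\<in>E. -1 \<le> rho y \<and> rho y \<le> 1"
    and R_pos: "R > 0" and R_ne1: "R \<noteq> 1"
    and y0E: "y0 \<in> E"
    \<comment> \<open>(A1)\<close>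
    and eta_pos: "\<forall>y\<ge>y0. eta_fun R r lam delta y > 0"
    and eta_d1: "\<forall>y\<ge>y0. (eta_fun R r lam delta has_real_derivative eta1 y) (at y within {y0..})"
    and eta_d2: "\<forall>y\<ge>y0. (eta1 has_real_derivative eta2 y) (at y within {y0..})"
    and eta2_cont: "continuous_on {y0..} eta2"
    \<comment> \<open>(A2)\<close>
    and A2: "\<exists>M. \<forall>y\<ge>y0. \<bar>(b y)^2 / eta_fun R r lam delta y\<bar> \<le> M
               \<and> \<bar>atilde_fun R a rho lam b y / eta_fun R r lam delta y\<bar> \<le> M
               \<and> \<bar>eta1 y / eta_fun R r lam delta y\<bar> \<le> M"
    \<comment> \<open>(A3)\<close>
    and A3: "((\<lambda>y. Psi_val (b y) (atilde_fun R a rho lam b y) (d_fun R b rho y)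
                 (eta_fun R r lam delta y) (eta1 y) (eta2 y)) \<longlongrightarrow> 1) at_top"
    \<comment> \<open>u solves the ODE on [y0,\<infinity>)\<close>
    and u_d1: "\<forall>y\<ge>y0. (u has_real_derivative u1 y) (at y within {y0..})"
    and u_d2: "\<forall>y\<ge>y0. (u1 has_real_derivative u2 y) (at y within {y0..})"
    and ode: "\<forall>y\<ge>y0. 0 = (1/2) * (b y)^2 * u2 y + atilde_fun R a rho lam b y * u1 y
                 + eta_fun R r lam delta y * u y - (u y)^2 - d_fun R b rho y * (u1 y)^2 / u y"
    and C_pos: "0 < C1" "C1 < C2"
    and u_bounds: "\<forall>y\<ge>y0. C1 * eta_fun R r lam delta y \<le> u y \<and> u y \<le> C2 * eta_fun R r lam delta y"
    and K_nz: "K1 \<noteq> 0" "K2 \<noteq> 0"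
    and lim1: "((\<lambda>y. atilde_fun R a rho lam b y / eta_fun R r lam delta y
                 + ((b y)^2 - 2 * d_fun R b rho y) * eta1 y / (eta_fun R r lam delta y)^2) \<longlongrightarrow> K1) at_top"
    and lim2: "((\<lambda>y. d_fun R b rho y / eta_fun R r lam delta y) \<longlongrightarrow> K2) at_top"
    and lim3: "((\<lambda>y. eta1 y / eta_fun R r lam delta y) \<longlongrightarrow> 0) at_top"
  shows "((\<lambda>y. u1 y / u y) \<longlongrightarrow> 0) at_top"
proof -
  have "y \<in> E" if "y0 \<le> y" for y
    using y0E that unfolding E_def by (auto intro: less_le_trans)
  then have b_nz': "\<forall>y\<ge>y0. b y \<noteq> 0"
    and d_bounds: "\<forall>y\<ge>y0. (1 + min R 1) * (b y)\<^sup>2 / 2 \<le> d_fun R b rho y \<and> d_fun R b rho y \<le> (R + 2) * (b y)\<^sup>2 / 2"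
    using b_nz rho_range d_fun_bounds[OF R_pos] by auto
  show ?thesis
    by (rule log_derivative_tendsto_0[OF eta_pos eta_d1 eta_d2 u_d1 u_d2 ode C_pos(1) u_bounds b_nz'
          d_bounds _ A3 lim1 lim2 K_nz(2) lim3]) (use R_pos in simp)
qed

end
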